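(* Let $n,m$ be non-negative integers, not both equal to $0$. Then \[\sum_{d=0}^{\min(n,m)}\frac{(-1)^d}{4^{\lfloor (n+m-2d)/2\rfloor}}\,\frac{n+m-2d}{n+m-d}\binom{n+m-d}{n-d,\,m-d,\,d}\binom{2\lfloor (n+m-2d)/2\rfloor}{\lfloor (n+m-2d)/2\rfloor}=\frac{1}{4^{\lfloor n/2\rfloor+\lfloor m/2\rfloor}}\binom{2\lfloor n/2\rfloor}{\lfloor n/2\rfloor}\binom{2\lfloor m/2\rfloor}{\lfloor m/2\rfloor}.\]
   Context: $\binom{s}{a,\,b,\,c}=\frac{s!}{a!\,b!\,c!}$ denotes the multinomial coefficient (with $a+b+c=s$). *)

theory Defs
  imports Complex_Main
begin

definition multinomial3 :: "nat \<Rightarrow> nat \<Rightarrow> nat \<Rightarrow> nat \<Rightarrow> real" where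
  "multinomial3 s a b c = fact s / (fact a * fact b * fact c)"

end

theory Submission
  imports Defs
begin

(* Let t = (x + y)/(1 + x y) and C(t) = sqrt((1 + t)/(1 - t)) = sum_k c_k t^k, where
   c_k = binom(2j, j)/4^j with j = k div 2.  For (n, m) <> (0, 0) the d-th summand is c_k times
   the coefficient of x^n y^m in t^k, k = n + m - 2d, and the right-hand side is c_n c_m, so the
   identity is the coefficient form of C(t) = C(x) C(y), which holds because
   (1 + t)/(1 - t) = (1 + x)(1 + y)/((1 - x)(1 - y)).
   Instead of two-variable power series we use the operator (1 - x^2) d/dx: it fixes C and maps
   t^k to k t^(k-1) - k t^(k+1).  On coefficients this gives (k + 2) c_(k+2) = c_(k+1) + k c_k and
   the same three-term recurrence in n for both sides; the cases n = 0 and n = 1 are direct. *)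

lemma central_binomial_Suc:
  "Suc j * (2 * Suc j choose Suc j) = 2 * (2 * j + 1) * (2 * j choose j)"
proof -
  have "2 * Suc j choose Suc j = (Suc (2 * j) choose j) + (Suc (2 * j) choose Suc j)"
    by (simp del: binomial_Suc_Suc add: binomial_Suc_Suc[symmetric])
  also have "Suc (2 * j) choose j = Suc (2 * j) choose Suc j"
    using binomial_symmetric[of j "Suc (2 * j)"] by simp
  finally have "Suc j * (2 * Suc j choose Suc j) = 2 * (Suc j * (Suc (2 * j) choose Suc j))"
    by (simp del: binomial_Suc_Suc)
  also have "\<dots> = 2 * (2 * j + 1) * (2 * j choose j)"
    by (simp only: Suc_times_binomial) simp
  finally show ?thesis .
qed

definition sqrt_quot_coeff :: "nat \<Rightarrow> real" where
  "sqrt_quot_coeff k = real (2 * (k div 2) choose (k div 2)) / 4 ^ (k div 2)"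

lemma sqrt_quot_coeff_odd: "sqrt_quot_coeff (2 * j + 1) = sqrt_quot_coeff (2 * j)"
  by (simp add: sqrt_quot_coeff_def)

lemma sqrt_quot_coeff_even_Suc:
  "2 * real (j + 1) * sqrt_quot_coeff (2 * j + 2) = (2 * real j + 1) * sqrt_quot_coeff (2 * j)"
proof -
  have "2 * real (j + 1) * sqrt_quot_coeff (2 * j + 2)
        = real (Suc j * (2 * Suc j choose Suc j)) / (2 * 4 ^ j)"
    by (simp add: sqrt_quot_coeff_def field_simps del: binomial_Suc_Suc)
  also have "\<dots> = (2 * real j + 1) * sqrt_quot_coeff (2 * j)"
    unfolding central_binomial_Suc by (simp add: sqrt_quot_coeff_def field_simps)
  finally show ?thesis .
qed

lemma sqrt_quot_coeff_rec:
  "real (k + 2) * sqrt_quot_coeff (k + 2) = sqrt_quot_coeff (k + 1) + real k * sqrt_quot_coeff k"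
proof (cases "even k")
  case True
  then obtain j where "k = 2 * j" by blast
  with sqrt_quot_coeff_even_Suc[of j] sqrt_quot_coeff_odd[of j] show ?thesis
    by (simp add: algebra_simps)
next
  case False
  then obtain j where "k = 2 * j + 1" by (blast elim: oddE)
  with sqrt_quot_coeff_even_Suc[of j] sqrt_quot_coeff_odd[of "j + 1"] sqrt_quot_coeff_odd[of j] show ?thesis
    by (simp add: algebra_simps)
qed

lemma multinomial3_Suc_left:
  "multinomial3 (Suc s) (Suc a) b c = real (Suc s) / real (Suc a) * multinomial3 s a b c"
  by (simp add: multinomial3_def)

lemma multinomial3_Suc_middle:
  "multinomial3 (Suc s) a (Suc b) c = real (Suc s) / real (Suc b) * multinomial3 s a b c"
  by (simp add: multinomial3_def)

lemma multinomial3_Suc_right: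
  "multinomial3 (Suc s) a b (Suc c) = real (Suc s) / real (Suc c) * multinomial3 s a b c"
  by (simp add: multinomial3_def)

(* For a + b > 0 the coefficient of x^(a+d) y^(b+d) in t^(a+b); but signed_trinomial 0 0 0 = 0. *)
definition signed_trinomial :: "nat \<Rightarrow> nat \<Rightarrow> nat \<Rightarrow> real" where
  "signed_trinomial a b d =
     (-1) ^ d * (real (a + b) / real (a + b + d)) * multinomial3 (a + b + d) a b d"

(* The coefficient of x^(a+d+1) y^(b+d+1) in (1 - x^2) d/dx t^k = k t^(k-1) - k t^(k+1),
   k = a + b + 1. *)
lemma signed_trinomial_recurrence:
  "real (a + d + 2) * signed_trinomial (a + 1) b (d + 1) - real (a + d) * signed_trinomial a (b + 1) d
   = real (a + b + 1) * (signed_trinomial a b (d + 1) - signed_trinomial (a + 1) (b + 1) d)"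
proof -
  define s where "s = a + b + d"
  define M where "M = (-1) ^ d * multinomial3 s a b d"
  have T1: "real (a + 1) * real (d + 1) * signed_trinomial (a + 1) b (d + 1)
            = - (real (a + b + 1) * real (s + 1) * M)"
    unfolding signed_trinomial_def M_def s_def
    by (simp add: multinomial3_Suc_left multinomial3_Suc_right mult_ac)
  have T2: "real (b + 1) * signed_trinomial a (b + 1) d = real (a + b + 1) * M"
    unfolding signed_trinomial_def M_def s_def
    by (simp add: multinomial3_Suc_middle mult_ac)
  have T3: "real (d + 1) * signed_trinomial a b (d + 1) = - (real (a + b) * M)"
    unfolding signed_trinomial_def M_def s_def
    by (simp add: multinomial3_Suc_right mult_ac)
  have T4: "real (a + 1) * real (b + 1) * signed_trinomial (a + 1) (b + 1) d
            = real (a + b + 2) * real (s + 1) * M"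
    unfolding signed_trinomial_def M_def s_def
    by (simp add: multinomial3_Suc_left multinomial3_Suc_middle mult_ac)
  have poly:
    "real (a + d + 2) * real (s + 1) * real (b + 1) + real (a + d) * real (a + 1) * real (d + 1)
     = real (a + b) * real (a + 1) * real (b + 1) + real (a + b + 2) * real (s + 1) * real (d + 1)"
    unfolding s_def by (simp add: algebra_simps)
  have "real (a + 1) * real (b + 1) * real (d + 1) *
        ((real (a + d + 2) * signed_trinomial (a + 1) b (d + 1) - real (a + d) * signed_trinomial a (b + 1) d)
         - real (a + b + 1) * (signed_trinomial a b (d + 1) - signed_trinomial (a + 1) (b + 1) d)) = 0"
    using T1 T2 T3 T4 poly by algebra
  then show ?thesis
    by simp
qed

(* The same identity at d = -1, a = -1 and b = -1, where the terms with a negative index vanish. *)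
lemma signed_trinomial_Suc_left_zero:
  assumes "a + b \<noteq> 0"
  shows "real (a + 1) * signed_trinomial (a + 1) b 0 = real (a + b + 1) * signed_trinomial a b 0"
proof -
  have "real a + real b \<noteq> 0"
    using assms by linarith
  then show ?thesis
    by (simp add: signed_trinomial_def multinomial3_Suc_left)
qed

lemma signed_trinomial_left_edge:
  "real (d + 1) * signed_trinomial 0 b (d + 1) = - (real b * signed_trinomial 0 (b + 1) d)"
proof -
  define M where "M = (-1) ^ d * multinomial3 (b + d) 0 b d"
  have "real (d + 1) * signed_trinomial 0 b (d + 1) = - (real b * M)"
    unfolding signed_trinomial_def M_def by (simp add: multinomial3_Suc_right mult_ac)
  moreover have "signed_trinomial 0 (b + 1) d = M"
    unfolding signed_trinomial_def M_def by (simp add: multinomial3_Suc_middle mult_ac)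
  ultimately show ?thesis
    by simp
qed

lemma signed_trinomial_right_edge:
  "real (a + d) * signed_trinomial a 0 d = real a * signed_trinomial (a + 1) 0 d"
proof -
  define M where "M = (-1) ^ d * multinomial3 (a + d) a 0 d"
  have "real (a + d) * signed_trinomial a 0 d = real a * M"
    unfolding signed_trinomial_def M_def by (cases "a + d = 0") (simp_all add: mult_ac)
  moreover have "signed_trinomial (a + 1) 0 d = M"
    unfolding signed_trinomial_def M_def by (simp add: multinomial3_Suc_left mult_ac)
  ultimately show ?thesis
    by simp
qed

definition trinomial_weight :: "nat \<Rightarrow> nat \<Rightarrow> nat \<Rightarrow> real" where
  "trinomial_weight n m d = (if d \<le> n \<and> d \<le> m then signed_trinomial (n - d) (m - d) d else 0)"

lemma trinomial_weight_recurrence: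
  assumes "n \<ge> 1"
  shows "real (n + 1) * trinomial_weight (n + 1) m (d + 1) - (real n - 1) * trinomial_weight (n - 1) m d
         = (real n + real m - 1 - 2 * real d) * (trinomial_weight n m (d + 1) - trinomial_weight n m d)"
proof -
  consider (inner) a b where "n = d + 1 + a" "m = d + 1 + b"
    | (left) b where "n = d" "m = d + 1 + b"
    | (right) a where "m = d" "n = d + 1 + a"
    | (outer) "n < d \<or> m < d \<or> (d = n \<and> d = m)"
    by (metis add.commute add_Suc_right less_imp_Suc_add linorder_neqE_nat plus_1_eq_Suc)
  then show ?thesis
  proof cases
    case (inner a b)
    then show ?thesis
      using signed_trinomial_recurrence[of a d b] by (simp add: trinomial_weight_def ac_simps)
  next
    case (left b)
    then show ?thesis
      using assms signed_trinomial_left_edge[of d b] by (auto simp: trinomial_weight_def ac_simps)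
  next
    case (right a)
    then show ?thesis
      using signed_trinomial_right_edge[of a d] by (simp add: trinomial_weight_def ac_simps)
  next
    case outer
    then have "trinomial_weight (n + 1) m (d + 1) = 0" "trinomial_weight (n - 1) m d = 0"
      "trinomial_weight n m (d + 1) = 0" "trinomial_weight n m d = 0"
      using assms by (auto simp: trinomial_weight_def signed_trinomial_def)
    then show ?thesis
      by simp
  qed
qed

lemma trinomial_weight_0_recurrence:
  "n \<ge> 1 \<Longrightarrow> real (n + 1) * trinomial_weight (n + 1) m 0 = real (n + m + 1) * trinomial_weight n m 0"
  using signed_trinomial_Suc_left_zero[of n m] by (simp add: trinomial_weight_def)

lemma trinomial_weight_coeff_telescope:
  "(real n + real m + 1 - 2 * real d) * trinomial_weight n m d * sqrt_quot_coeff (n + m + 1 - 2 * d)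
   - (real n + real m - 1 - 2 * real d) * trinomial_weight n m d * sqrt_quot_coeff (n + m - 1 - 2 * d)
   = trinomial_weight n m d * sqrt_quot_coeff (n + m - 2 * d)"
proof (cases "d \<le> n \<and> d \<le> m \<and> n + m \<noteq> 2 * d")
  case True
  define j where "j = n + m - 2 * d - 1"
  have idx: "n + m + 1 - 2 * d = j + 2" "n + m - 2 * d = j + 1" "n + m - 1 - 2 * d = j"
    "real n + real m + 1 - 2 * real d = real (j + 2)" "real n + real m - 1 - 2 * real d = real j"
    using True by (auto simp: j_def)
  have rec: "sqrt_quot_coeff (j + 1) = real (j + 2) * sqrt_quot_coeff (j + 2) - real j * sqrt_quot_coeff j"
    using sqrt_quot_coeff_rec[of j] by simp
  show ?thesis
    unfolding idx rec by (simp add: algebra_simps)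
next
  case False
  then have "trinomial_weight n m d = 0"
    by (auto simp: trinomial_weight_def signed_trinomial_def)
  then show ?thesis
    by simp
qed

lemma trinomial_weight_coeff_step:
  assumes "n \<ge> 1"
  shows "real (n + 1) * (trinomial_weight (n + 1) m (Suc d) * sqrt_quot_coeff (n + 1 + m - 2 * Suc d))
           - (real n - 1) * (trinomial_weight (n - 1) m d * sqrt_quot_coeff (n - 1 + m - 2 * d))
         = (real n + real m + 1 - 2 * real (Suc d)) * trinomial_weight n m (Suc d)
             * sqrt_quot_coeff (n + m + 1 - 2 * Suc d)
           - (real n + real m - 1 - 2 * real d) * trinomial_weight n m d
             * sqrt_quot_coeff (n + m - 1 - 2 * d)"
    (is "?lhs = ?rhs")
proof -
  have idx: "n + 1 + m - 2 * Suc d = n + m - 1 - 2 * d" "n - 1 + m - 2 * d = n + m - 1 - 2 * d"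
    "n + m + 1 - 2 * Suc d = n + m - 1 - 2 * d"
    using assms by auto
  have "?lhs = (real (n + 1) * trinomial_weight (n + 1) m (d + 1)
                - (real n - 1) * trinomial_weight (n - 1) m d) * sqrt_quot_coeff (n + m - 1 - 2 * d)"
    unfolding idx by (simp add: algebra_simps)
  also have "\<dots> = (real n + real m - 1 - 2 * real d) * (trinomial_weight n m (d + 1) - trinomial_weight n m d)
                   * sqrt_quot_coeff (n + m - 1 - 2 * d)"
    unfolding trinomial_weight_recurrence[OF assms] ..
  also have "\<dots> = ?rhs"
    unfolding idx by (simp add: algebra_simps)
  finally show ?thesis .
qed

definition trinomial_sum :: "nat \<Rightarrow> nat \<Rightarrow> real" where
  "trinomial_sum n m = (\<Sum>d = 0..min n m. trinomial_weight n m d * sqrt_quot_coeff (n + m - 2 * d))"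

lemma trinomial_sum_lessThan:
  assumes "min n m < K"
  shows "trinomial_sum n m = (\<Sum>d<K. trinomial_weight n m d * sqrt_quot_coeff (n + m - 2 * d))"
  unfolding trinomial_sum_def
proof (rule sum.mono_neutral_left)
  show "{0..min n m} \<subseteq> {..<K}"
    using assms by auto
qed (auto simp: trinomial_weight_def)

lemma trinomial_sum_recurrence:
  assumes "n \<ge> 1"
  shows "real (n + 1) * trinomial_sum (n + 1) m - (real n - 1) * trinomial_sum (n - 1) m = trinomial_sum n m"
proof -
  define K where "K = n + 1"
  define u where "u d = (real n + real m + 1 - 2 * real d) * trinomial_weight n m d
                        * sqrt_quot_coeff (n + m + 1 - 2 * d)" for d
  define v where "v d = (real n + real m - 1 - 2 * real d) * trinomial_weight n m d
                        * sqrt_quot_coeff (n + m - 1 - 2 * d)" for d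
  define f where "f d = real (n + 1) * (trinomial_weight (n + 1) m d * sqrt_quot_coeff (n + 1 + m - 2 * d))" for d
  define g where "g d = (real n - 1) * (trinomial_weight (n - 1) m d * sqrt_quot_coeff (n - 1 + m - 2 * d))" for d
  have f0: "f 0 = u 0"
    using trinomial_weight_0_recurrence[OF assms, of m] by (simp add: f_def u_def ac_simps)
  have fg: "f (Suc d) - g d = u (Suc d) - v d" for d
    unfolding f_def g_def u_def v_def by (rule trinomial_weight_coeff_step[OF assms])
  have uK: "u K = 0"
    by (simp add: u_def K_def trinomial_weight_def)
  have "real (n + 1) * trinomial_sum (n + 1) m - (real n - 1) * trinomial_sum (n - 1) m
        = (\<Sum>d<Suc K. f d) - (\<Sum>d<K. g d)"
    unfolding f_def g_def sum_distrib_left[symmetric]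
    using trinomial_sum_lessThan[of "n + 1" m "Suc K"] trinomial_sum_lessThan[of "n - 1" m K]
    by (simp add: K_def)
  also have "\<dots> = u 0 + (\<Sum>d<K. u (Suc d) - v d)"
    unfolding sum.lessThan_Suc_shift f0 fg[symmetric] sum_subtractf by simp
  also have "\<dots> = (\<Sum>d<K. u d - v d) + u K"
    using sum.lessThan_Suc_shift[of u K] by (simp add: sum_subtractf)
  also have "\<dots> = trinomial_sum n m"
    unfolding uK add_0_right
    unfolding u_def v_def trinomial_weight_coeff_telescope
    by (simp add: trinomial_sum_lessThan[of n m K] K_def)
  finally show ?thesis .
qed

lemma trinomial_sum_0:
  "m \<noteq> 0 \<Longrightarrow> trinomial_sum 0 m = sqrt_quot_coeff 0 * sqrt_quot_coeff m"
  by (simp add: trinomial_sum_def trinomial_weight_def signed_trinomial_def multinomial3_def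
      sqrt_quot_coeff_def)

lemma trinomial_sum_1:
  "trinomial_sum 1 m = sqrt_quot_coeff 1 * sqrt_quot_coeff m"
proof (cases m)
  case 0
  have "trinomial_weight 1 0 0 = 1"
    by (simp add: trinomial_weight_def signed_trinomial_def multinomial3_def)
  then show ?thesis
    unfolding 0 by (simp add: trinomial_sum_def sqrt_quot_coeff_def)
next
  case (Suc k)
  have "trinomial_weight 1 m 0 = real (k + 2)" "trinomial_weight 1 m 1 = - real k"
    unfolding Suc
    by (simp_all add: trinomial_weight_def signed_trinomial_def multinomial3_Suc_left
        multinomial3_Suc_right multinomial3_def)
  then have "trinomial_sum 1 m = real (k + 2) * sqrt_quot_coeff (k + 2) - real k * sqrt_quot_coeff k"
    unfolding trinomial_sum_def Suc by (simp add: numeral_2_eq_2)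
  also have "\<dots> = sqrt_quot_coeff m"
    unfolding Suc using sqrt_quot_coeff_rec[of k] by simp
  finally show ?thesis
    by (simp add: sqrt_quot_coeff_def)
qed

lemma trinomial_sum_eq:
  "\<not> (n = 0 \<and> m = 0) \<Longrightarrow> trinomial_sum n m = sqrt_quot_coeff n * sqrt_quot_coeff m"
proof (induction n rule: induct_nat_012)
  case 0
  then show ?case
    by (simp add: trinomial_sum_0)
next
  case 1
  show ?case
    using trinomial_sum_1 by (simp only: One_nat_def)
next
  case (ge2 k)
  (* for k = m = 0 the induction hypothesis fails, but then the factor k vanishes *)
  have "real k * trinomial_sum k m = real k * (sqrt_quot_coeff k * sqrt_quot_coeff m)"
    using ge2.IH(1) by (cases "k = 0") simp_all
  moreover have "trinomial_sum (k + 1) m = sqrt_quot_coeff (k + 1) * sqrt_quot_coeff m"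
    using ge2.IH(2) by simp
  ultimately have "real (k + 2) * trinomial_sum (k + 2) m
      = real (k + 2) * (sqrt_quot_coeff (k + 2) * sqrt_quot_coeff m)"
    using trinomial_sum_recurrence[of "k + 1" m] sqrt_quot_coeff_rec[of k]
    by (simp add: algebra_simps)
  then show ?case
    by (simp add: numeral_2_eq_2)
qed

theorem corollary4p1:
  fixes n m :: nat
  assumes "\<not> (n = 0 \<and> m = 0)"
  shows "(\<Sum>d = 0..min n m.
            (-1) ^ d / 4 ^ ((n + m - 2 * d) div 2)
            * (real (n + m - 2 * d) / real (n + m - d))
            * multinomial3 (n + m - d) (n - d) (m - d) d
            * real ((2 * ((n + m - 2 * d) div 2)) choose ((n + m - 2 * d) div 2)))
         = 1 / 4 ^ (n div 2 + m div 2)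
           * real ((2 * (n div 2)) choose (n div 2))
           * real ((2 * (m div 2)) choose (m div 2))"
    (is "?lhs = ?rhs")
proof -
  have "?lhs = trinomial_sum n m"
    unfolding trinomial_sum_def
    by (rule sum.cong) (auto simp: trinomial_weight_def signed_trinomial_def sqrt_quot_coeff_def)
  also have "\<dots> = sqrt_quot_coeff n * sqrt_quot_coeff m"
    using trinomial_sum_eq[OF assms] .
  also have "\<dots> = ?rhs"
    by (simp add: sqrt_quot_coeff_def power_add)
  finally show ?thesis .
qed

end
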